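(* Let $X$ be an integral regular projective curve of genus $g$ over $\mathbb{F}_q$ and $\mathbf{n}_{m-1}=(n_0,\dots,n_{m-1})$ a tuple of positive integers. Assume that the $\mathbf{n}_{m-1}$-derived alpha invariants $\alpha^{(\mathbf{n}_{m-1})}_X(\ell)$ ($\ell=0,\dots,g-1$) and the beta invariant $\beta^{(\mathbf{n}_{m-1})}_X$ are all strictly positive. Then for every positive integer $k$, $\widehat\zeta^{(\mathbf{n}_{m-1})}_X(k)>0$ and $\widehat v_k=\prod_{j=1}^k\widehat\zeta^{(\mathbf{n}_{m-1})}_X(j)>0$.
   Context: Let $\zeta_X(s)=\sum_{D\ge 0}N(D)^{-s}$ be the Artin zeta function of $X$ ($D$ running over effective divisors) and $\widehat\zeta_X(s)=q^{s(g-1)}\zeta_X(s)$ the complete Artin zeta function, a rational function of $q^{-s}$. Derived zeta functions are defined recursively. For the empty tuple $\mathbf{n}_{-1}=()$ put $q_{\mathbf{n}_{-1}}=q$, $T_{\mathbf{n}_{-1}}=q^{-s}$, $\widehat\zeta^{(\mathbf{n}_{-1})}_X=\widehat\zeta_X$. For a tuple $\mathbf{n}_m=(n_0,\dots,n_m)$ of positive integers ($m\ge 0$) put $\mathbf{n}_{m-1}=(n_0,\dots,n_{m-1})$, $q_{\mathbf{n}_m}=q^{n_0n_1\cdots n_m}$, $T_{\mathbf{n}_m}=q^{-n_0n_1\cdots n_m s}$. Writing $\widehat Z^{(\mathbf{n}_{m-1})}_X(T_{\mathbf{n}_{m-1}}):=\widehat\zeta^{(\mathbf{n}_{m-1})}_X(s)$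 (a rational function of $T_{\mathbf{n}_{m-1}}$), set $\widehat\zeta^{(\mathbf{n}_{m-1})}_X(1):=\operatorname{Res}_{T_{\mathbf{n}_{m-1}}=1}\widehat Z^{(\mathbf{n}_{m-1})}_X(T_{\mathbf{n}_{m-1}})$ and for integers $N\ge 1$, $\widehat v_N:=\prod_{k=1}^{N}\widehat\zeta^{(\mathbf{n}_{m-1})}_X(k)$. Then $$\widehat\zeta^{(\mathbf{n}_m)}_X(s)=q_{\mathbf{n}_{m-1}}^{\binom{n_m}{2}(g-1)}\sum_{a=1}^{n_m}\Biggl(\sum_{\substack{k_1,\dots,k_p>0\\k_1+\cdots+k_p=n_m-a}}\frac{\widehat v_{k_1}\cdots\widehat v_{k_p}}{\prod_{j=1}^{p-1}(1-q_{\mathbf{n}_{m-1}}^{k_j+k_{j+1}})}\cdot\frac{1}{1-q_{\mathbf{n}_{m-1}}^{n_ms-n_m+a+k_p}}\Biggr)\widehat\zeta^{(\mathbf{n}_{m-1})}_X(n_ms-n_m+a)\Biggl(\sum_{\substack{l_1,\dots,l_r>0\\l_1+\cdots+l_r=a-1}}\frac{1}{1-q_{\mathbf{n}_{m-1}}^{-n_ms+n_m-a+1+l_1}}\cdot\frac{\widehat v_{l_1}\cdots\widehat v_{l_r}}{\prod_{j=1}^{r-1}(1-q_{\mathbf{n}_{m-1}}^{l_j+l_{j+1}})}\Biggr),$$ where the inner sums run over ordered tuples of positive integers (of any length) with the indicated sum, and an inner sum over tuples summing to $0$ is defined to be $1$. (For $m=0$ this is the rank $n_0$ non-abelian zeta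 function.) For a tuple $\mathbf{n}$, with $Q=q_{\mathbf{n}}$, $T=T_{\mathbf{n}}$, the derived alpha invariants $\alpha^{(\mathbf{n})}_X(\ell)$ ($0\le\ell\le g-1$) and beta invariant $\beta^{(\mathbf{n})}_X$ are the numbers for which $$\widehat Z^{(\mathbf{n})}_X(T)=\sum_{\ell=0}^{g-2}\alpha^{(\mathbf{n})}_X(\ell)\bigl(T^{\ell-(g-1)}+Q^{(g-1)-\ell}T^{(g-1)-\ell}\bigr)+\alpha^{(\mathbf{n})}_X(g-1)+\frac{(Q-1)T\beta^{(\mathbf{n})}_X}{(1-T)(1-QT)}$$ (such a representation exists); in particular $\beta^{(\mathbf{n})}_X=\operatorname{Res}_{T=1}\widehat Z^{(\mathbf{n})}_X(T)$. *)

theory Defs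
  imports "HOL-Complex_Analysis.Complex_Analysis" "HOL-Computational_Algebra.Primes"
begin

text \<open>The complete derived zeta function written through its alpha and beta invariants,
as a (complex) rational function of T.  Q is q_n, g the genus, al the alpha invariants
(al l for l = 0..g-1), be the beta invariant.\<close>
definition Zhat_ab :: "real \<Rightarrow> nat \<Rightarrow> (nat \<Rightarrow> real) \<Rightarrow> real \<Rightarrow> complex \<Rightarrow> complex" where
  "Zhat_ab Q g al be T =
     (\<Sum>l<g - 1. complex_of_real (al l) *
        (T powi (int l - (int g - 1)) + complex_of_real Q ^ (g - 1 - l) * T ^ (g - 1 - l)))
     + complex_of_real (al (g - 1))
     + (complex_of_real Q - 1) * T * complex_of_real be
         / ((1 - T) * (1 - complex_of_real Q * T))"

text \<open>Special values: zeta(1) is the residue at T = 1, zeta(k) for k >= 2 is the value at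
s = k, i.e. at T = Q^(-k).\<close>
definition zeta_val :: "(complex \<Rightarrow> complex) \<Rightarrow> real \<Rightarrow> nat \<Rightarrow> complex" where
  "zeta_val Z Q k = (if k = 1 then residue Z 1 else Z (complex_of_real (inverse (Q ^ k))))"

end

theory Submission
  imports Defs
begin

text \<open>Apart from the term carrying the beta invariant, the complete zeta function is
a Laurent polynomial in T, so its residue at T = 1 is the residue of that term, which is beta.
For k \<ge> 2 the point T = Q^(-k) lies in the interval 0 < T < 1/Q, where every term of the
Laurent polynomial is positive (the alpha invariants are) and so is
(Q - 1) T beta / ((1 - T)(1 - Q T)).\<close>

lemma residue_Zhat_ab:
  fixes Q :: real
  assumes "1 < Q"
  shows "residue (Zhat_ab Q g al be) 1 = complex_of_real be"
proof -
  define F where "F = (\<lambda>T::complex. (\<Sum>l<g - 1. complex_of_real (al l) *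
        (T powi (int l - (int g - 1)) + complex_of_real Q ^ (g - 1 - l) * T ^ (g - 1 - l)))
     + complex_of_real (al (g - 1)))"
  define G where "G = (\<lambda>T::complex. (complex_of_real Q - 1) * T * complex_of_real be
                                      / (complex_of_real Q * T - 1))"
  have decomp: "Zhat_ab Q g al be = (\<lambda>T. F T + G T / (T - 1))"
  proof
    fix T :: complex
    have "(1 - T) * (1 - complex_of_real Q * T) = (T - 1) * (complex_of_real Q * T - 1)"
      by (simp add: algebra_simps)
    then show "Zhat_ab Q g al be T = F T + G T / (T - 1)"
      unfolding Zhat_ab_def F_def G_def by (simp add: divide_divide_eq_left mult.commute)
  qed
  \<comment> \<open>The other singularities 0 and 1/Q lie just outside this ball.\<close>
  define s where "s = ball (1::complex) (1 - 1 / Q)"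
  have "open s" and "1 \<in> s"
    using assms unfolding s_def by auto
  have "0 \<notin> s"
    using assms unfolding s_def by (simp add: dist_norm)
  have "complex_of_real Q * T \<noteq> 1" if "T \<in> s" for T
  proof
    assume "complex_of_real Q * T = 1"
    then have "1 - T = complex_of_real (1 - 1 / Q)"
      using assms by (auto simp: field_simps)
    then have "dist 1 T = \<bar>1 - 1 / Q\<bar>"
      by (simp only: dist_norm norm_of_real)
    with that assms show False
      unfolding s_def by simp
  qed
  then have G_holo: "G holomorphic_on s"
    unfolding G_def by (intro holomorphic_intros) auto
  have F_holo: "F holomorphic_on s"
    unfolding F_def using \<open>0 \<notin> s\<close> by (intro holomorphic_intros) auto
  have "residue (Zhat_ab Q g al be) 1 = residue F 1 + residue (\<lambda>T. G T / (T - 1)) 1"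
    unfolding decomp
    by (rule residue_add[OF \<open>open s\<close> \<open>1 \<in> s\<close>])
       (use F_holo G_holo in \<open>auto intro!: holomorphic_intros intro: holomorphic_on_subset\<close>)
  also have "\<dots> = G 1"
    using F_holo G_holo
    by (simp add: residue_holo[OF \<open>open s\<close> \<open>1 \<in> s\<close>] residue_simple[OF \<open>open s\<close> \<open>1 \<in> s\<close>])
  also have "\<dots> = complex_of_real be"
    using assms unfolding G_def by (simp flip: of_real_diff)
  finally show ?thesis .
qed

lemma Zhat_ab_pos_real:
  fixes Q t :: real
  assumes "1 < Q" and "0 < t" and "Q * t < 1"
    and al_pos: "\<forall>l\<le>g - 1. al l > 0" and "be > 0"
  shows "Zhat_ab Q g al be (complex_of_real t) \<in> \<real> \<and> Re (Zhat_ab Q g al be (complex_of_real t)) > 0"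
proof -
  define R where "R = (\<Sum>l<g - 1. al l * (t powi (int l - (int g - 1)) + Q ^ (g - 1 - l) * t ^ (g - 1 - l)))
     + al (g - 1) + (Q - 1) * t * be / ((1 - t) * (1 - Q * t))"
  have "t < 1"
    using assms by (smt (verit) mult_less_cancel_right2)
  then have "0 < (Q - 1) * t * be / ((1 - t) * (1 - Q * t))"
    using assms by simp
  moreover have "0 \<le> (\<Sum>l<g - 1. al l * (t powi (int l - (int g - 1)) + Q ^ (g - 1 - l) * t ^ (g - 1 - l)))"
    using al_pos \<open>0 < t\<close> \<open>1 < Q\<close> by (intro sum_nonneg) (simp add: less_imp_le)
  moreover have "0 < al (g - 1)"
    using al_pos by auto
  ultimately have "0 < R"
    unfolding R_def by linarith
  moreover have "Zhat_ab Q g al be (complex_of_real t) = complex_of_real R"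
    unfolding Zhat_ab_def R_def by simp
  ultimately show ?thesis
    by simp
qed

lemma zeta_val_Zhat_ab_pos_real:
  fixes Q :: real
  assumes "1 < Q" and "1 \<le> k"
    and "\<forall>l\<le>g - 1. al l > 0" and "be > 0"
  shows "zeta_val (Zhat_ab Q g al be) Q k \<in> \<real> \<and> Re (zeta_val (Zhat_ab Q g al be) Q k) > 0"
proof (cases "k = 1")
  case True
  then show ?thesis
    using assms by (simp add: zeta_val_def residue_Zhat_ab)
next
  case False
  have "Q * inverse (Q ^ k) = inverse (Q ^ (k - 1))"
    using assms by (simp add: power_eq_if field_simps)
  also have "\<dots> < 1"
    using assms False by (simp add: one_less_power inverse_less_1_iff)
  finally show ?thesis
    using Zhat_ab_pos_real[OF \<open>1 < Q\<close> _ _ assms(3,4), of "inverse (Q ^ k)"] assms False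
    by (simp add: zeta_val_def)
qed

lemma prod_pos_Reals:
  fixes z :: "'a \<Rightarrow> complex"
  assumes "\<And>j. j \<in> A \<Longrightarrow> z j \<in> \<real> \<and> Re (z j) > 0"
  shows "(\<Prod>j\<in>A. z j) \<in> \<real> \<and> Re (\<Prod>j\<in>A. z j) > 0"
proof -
  have "(\<Prod>j\<in>A. z j) = (\<Prod>j\<in>A. complex_of_real (Re (z j)))"
    using assms by (intro prod.cong) (auto simp: of_real_Re)
  also have "\<dots> = complex_of_real (\<Prod>j\<in>A. Re (z j))"
    by simp
  finally have prod_eq: "(\<Prod>j\<in>A. z j) = complex_of_real (\<Prod>j\<in>A. Re (z j))" .
  have "(\<Prod>j\<in>A. Re (z j)) > 0"
    using assms by (intro prod_pos) auto
  then show ?thesis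
    unfolding prod_eq Re_complex_of_real by (blast intro: Reals_of_real)
qed

theorem lemma2p9:
  fixes q g :: nat and ns :: "nat list" and al :: "nat \<Rightarrow> real" and be :: real
  assumes q_pp: "\<exists>p r. prime p \<and> r > 0 \<and> q = p ^ r"
    and ns_pos: "\<forall>n\<in>set ns. n > 0"
    and g_pos: "g \<ge> 1"
    and al_pos: "\<forall>l\<le>g - 1. al l > 0"
    and be_pos: "be > 0"
  shows "\<forall>k::nat. k \<ge> 1 \<longrightarrow>
     (let Z = Zhat_ab (real (q ^ prod_list ns)) g al be;
          zv = zeta_val Z (real (q ^ prod_list ns))
      in (zv k \<in> \<real> \<and> Re (zv k) > 0) \<and>
         ((\<Prod>j=1..k. zv j) \<in> \<real> \<and> Re (\<Prod>j=1..k. zv j) > 0))"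
proof -
  obtain p r where "prime p" "r > 0" "q = p ^ r"
    using q_pp by blast
  have "prod_list ns > 0"
    using ns_pos by (induction ns) auto
  then have "1 < p ^ (r * prod_list ns)"
    using \<open>prime p\<close> \<open>r > 0\<close> prime_gt_1_nat by (intro one_less_power) auto
  then have "1 < q ^ prod_list ns"
    by (simp add: \<open>q = p ^ r\<close> power_mult)
  then have "1 < real (q ^ prod_list ns)"
    by linarith
  then have zv_pos: "zv k \<in> \<real> \<and> Re (zv k) > 0"
    if "1 \<le> k" "zv = zeta_val (Zhat_ab (real (q ^ prod_list ns)) g al be) (real (q ^ prod_list ns))"
    for zv k
    using zeta_val_Zhat_ab_pos_real al_pos be_pos that by blast
  show ?thesis
    unfolding Let_def
    by (intro allI impI conjI zv_pos prod_pos_Reals refl) auto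
qed

end
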